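(* Let $\mathcal{M}=(W,R,V)$ be a Kripke model, let $\Gamma=(\mathrm{card}(W))^+$ be the successor cardinal of the cardinality of $W$, let $w\in W$ and let $\varphi$ be a sentence of the modal $\mu$-calculus. Then $\mathcal{M},w\vDash\varphi$ (standard semantics) if and only if $\mathcal{M},w\Vdash^\Gamma\varphi$, i.e. Eloise has a winning strategy in the $\Gamma$-bounded evaluation game $(\mathcal{M},w,\varphi,\Gamma)$.
   Context: Formulae: $\varphi ::= p \mid \neg p \mid X \mid \varphi\vee\varphi \mid \varphi\wedge\varphi \mid \Diamond\varphi \mid \Box\varphi \mid \mu X\varphi \mid \nu X\varphi$ ($p$ proposition symbols, $X$ label symbols). Standard semantics with assignments $s$ of subsets of $W$ to label symbols: atoms, $X$ (iff $w\in s(X)$), Boolean and modal connectives as usual; $\mathcal{M},w\vDash_s\mu X\psi$ (resp. $\nu X\psi$) iff $w$ belongs to the least (resp. greatest) fixed point of the monotone operator $A\mapsto\{v\in W\mid\mathcal{M},v\vDash_{s[A/X]}\psi\}$. For sentences truth is independent of $s$. $\mathcal{M},w\Vdash^\Gamma\varphi$ means Eloise has a winning strategy in the $\Gamma$-bounded evaluation game $(\mathcal{M},w,\varphi,\Gamma)$, defined as follows. Positions $(v,\theta,c)$ with $v\in W$, $\theta$ a subformula occurrence of $\varphi$, and $c$ a clock mapping from the occurrences of the form $\mu X\psi$ / $\nu X\psi$ in $\varphi$ to ordinals $\le\Gamma$; initially $(w,\varphi,c_0)$ with $c_0\equiv\Gamma$. At $p$ (resp. $\neg p$) Eloise wins iff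 $v\in V(p)$ (resp. $v\notin V(p)$), else Abelard; at $\vee$/$\Diamond$ Eloise chooses a disjunct / an $R$-successor (losing if there is none), at $\wedge$/$\Box$ Abelard chooses a conjunct / an $R$-successor (losing if there is none); at $\mu X\psi$ Eloise, at $\nu X\psi$ Abelard sets the clock of that occurrence to some $\gamma<\Gamma$ and play continues at $\psi$; at an atomic $X$ whose nearest binder $\mathrm{rf}(X)\in\{\mu X\psi,\nu X\psi\}$ has clock value $\gamma$: if $\gamma=0$ the binder's owner (Eloise for $\mu$, Abelard for $\nu$) loses; otherwise the owner chooses $\gamma'<\gamma$, the binder's clock becomes $\gamma'$, the clocks of all $\mu/\nu$-occurrences inside $\psi$ are reset to $\Gamma$, others unchanged, and play continues at $(v,\psi,\cdot)$. A winning strategy for Eloise is a function of positions prescribing her moves so that she wins every play following it. *)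

theory Defs
  imports Main "HOL-Library.Sublist"
begin

datatype ('p, 'x) fm =
    Prop 'p | NProp 'p | Var 'x
  | Or "('p, 'x) fm" "('p, 'x) fm" | And "('p, 'x) fm" "('p, 'x) fm"
  | Dia "('p, 'x) fm" | Box "('p, 'x) fm"
  | Mu 'x "('p, 'x) fm" | Nu 'x "('p, 'x) fm"

fun fv :: "('p, 'x) fm \<Rightarrow> 'x set" where
  "fv (Prop a) = {}"
| "fv (NProp a) = {}"
| "fv (Var x) = {x}"
| "fv (Or f g) = fv f \<union> fv g"
| "fv (And f g) = fv f \<union> fv g"
| "fv (Dia f) = fv f"
| "fv (Box f) = fv f"
| "fv (Mu x f) = fv f - {x}"
| "fv (Nu x f) = fv f - {x}"

definition sentence :: "('p, 'x) fm \<Rightarrow> bool" where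
  "sentence f \<longleftrightarrow> fv f = {}"

section \<open>Standard semantics; Kripke model: worlds = UNIV :: 'w, R, V\<close>

fun sat :: "('w \<Rightarrow> 'w \<Rightarrow> bool) \<Rightarrow> ('p \<Rightarrow> 'w set) \<Rightarrow> ('x \<Rightarrow> 'w set)
            \<Rightarrow> ('p, 'x) fm \<Rightarrow> 'w set" where
  "sat R V s (Prop a) = V a"
| "sat R V s (NProp a) = - V a"
| "sat R V s (Var x) = s x"
| "sat R V s (Or f g) = sat R V s f \<union> sat R V s g"
| "sat R V s (And f g) = sat R V s f \<inter> sat R V s g"
| "sat R V s (Dia f) = {v. \<exists>u. R v u \<and> u \<in> sat R V s f}"
| "sat R V s (Box f) = {v. \<forall>u. R v u \<longrightarrow> u \<in> sat R V s f}"
| "sat R V s (Mu x f) = lfp (\<lambda>A. sat R V (s(x := A)) f)"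
| "sat R V s (Nu x f) = gfp (\<lambda>A. sat R V (s(x := A)) f)"

fun sub :: "('p, 'x) fm \<Rightarrow> nat list \<Rightarrow> ('p, 'x) fm option" where
  "sub f [] = Some f"
| "sub (Or f g) (0 # p) = sub f p"
| "sub (Or f g) (Suc 0 # p) = sub g p"
| "sub (And f g) (0 # p) = sub f p"
| "sub (And f g) (Suc 0 # p) = sub g p"
| "sub (Dia f) (0 # p) = sub f p"
| "sub (Box f) (0 # p) = sub f p"
| "sub (Mu x f) (0 # p) = sub f p"
| "sub (Nu x f) (0 # p) = sub f p"
| "sub _ _ = None"

definition binder_of :: "('p, 'x) fm \<Rightarrow> nat list \<Rightarrow> 'x \<Rightarrow> bool" where
  "binder_of \<phi> q x \<longleftrightarrow> (\<exists>g. sub \<phi> q = Some (Mu x g) \<or> sub \<phi> q = Some (Nu x g))"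

definition nearest_binder :: "('p, 'x) fm \<Rightarrow> nat list \<Rightarrow> 'x \<Rightarrow> nat list \<Rightarrow> bool" where
  "nearest_binder \<phi> p x q \<longleftrightarrow> strict_prefix q p \<and> binder_of \<phi> q x \<and>
     (\<forall>q'. strict_prefix q q' \<and> strict_prefix q' p \<longrightarrow> \<not> binder_of \<phi> q' x)"

text \<open>Ordinals below Gamma are the elements of Field r for a well-order r (pairs (a,b) mean a \<le> b);
  a clock value is "'o option", where None stands for Gamma itself and Some a for a < Gamma.\<close>

fun olt :: "'o rel \<Rightarrow> 'o option \<Rightarrow> 'o option \<Rightarrow> bool" where
  "olt r (Some a) (Some b) \<longleftrightarrow> (a, b) \<in> r \<and> a \<noteq> b"
| "olt r (Some a) None \<longleftrightarrow> True"
| "olt r None _ \<longleftrightarrow> False"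

type_synonym ('w, 'o) position = "'w \<times> nat list \<times> (nat list \<Rightarrow> 'o option)"

definition init_pos :: "'w \<Rightarrow> ('w, 'o) position" where
  "init_pos w = (w, [], \<lambda>_. None)"

definition regen :: "nat list \<Rightarrow> 'o option \<Rightarrow> (nat list \<Rightarrow> 'o option) \<Rightarrow> (nat list \<Rightarrow> 'o option)" where
  "regen q g c = (\<lambda>q'. if q' = q then g else if prefix (q @ [0]) q' then None else c q')"

definition eloise_turn :: "('p, 'x) fm \<Rightarrow> ('w, 'o) position \<Rightarrow> bool" where
  "eloise_turn \<phi> pos = (case pos of (v, p, c) \<Rightarrow>
     (case sub \<phi> p of
        Some (Or _ _) \<Rightarrow> True
      | Some (Dia _) \<Rightarrow> True
      | Some (Mu _ _) \<Rightarrow> True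
      | Some (Var x) \<Rightarrow> (\<exists>q g. nearest_binder \<phi> p x q \<and> sub \<phi> q = Some (Mu x g))
      | _ \<Rightarrow> False))"

definition abelard_turn :: "('p, 'x) fm \<Rightarrow> ('w, 'o) position \<Rightarrow> bool" where
  "abelard_turn \<phi> pos = (case pos of (v, p, c) \<Rightarrow>
     (case sub \<phi> p of
        Some (And _ _) \<Rightarrow> True
      | Some (Box _) \<Rightarrow> True
      | Some (Nu _ _) \<Rightarrow> True
      | Some (Var x) \<Rightarrow> (\<exists>q g. nearest_binder \<phi> p x q \<and> sub \<phi> q = Some (Nu x g))
      | _ \<Rightarrow> False))"

text \<open>Legal moves (successor positions) from a non-terminal position.  At a variable whose
  binder clock is 0 there is no smaller ordinal, so the owner has no move and loses.\<close>
definition moves :: "('w \<Rightarrow> 'w \<Rightarrow> bool) \<Rightarrow> 'o rel \<Rightarrow> ('p, 'x) fm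
                     \<Rightarrow> ('w, 'o) position \<Rightarrow> ('w, 'o) position set" where
  "moves R r \<phi> pos = (case pos of (v, p, c) \<Rightarrow>
     (case sub \<phi> p of
        Some (Or _ _) \<Rightarrow> {(v, p @ [0], c), (v, p @ [1], c)}
      | Some (And _ _) \<Rightarrow> {(v, p @ [0], c), (v, p @ [1], c)}
      | Some (Dia _) \<Rightarrow> {(u, p @ [0], c) | u. R v u}
      | Some (Box _) \<Rightarrow> {(u, p @ [0], c) | u. R v u}
      | Some (Mu _ _) \<Rightarrow> {(v, p @ [0], c(p := Some g)) | g. g \<in> Field r}
      | Some (Nu _ _) \<Rightarrow> {(v, p @ [0], c(p := Some g)) | g. g \<in> Field r}
      | Some (Var x) \<Rightarrow> {(v, q @ [0], regen q (Some g) c) | q g.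
                            nearest_binder \<phi> p x q \<and> g \<in> Field r \<and> olt r (Some g) (c q)}
      | _ \<Rightarrow> {}))"

text \<open>Eloise's strategy sigma is a function of positions, giving the position she moves to.
  wins R V r phi sigma pos: every play from pos following sigma is won by Eloise
  (plays are finite: inductive definition).\<close>
inductive wins :: "('w \<Rightarrow> 'w \<Rightarrow> bool) \<Rightarrow> ('p \<Rightarrow> 'w set) \<Rightarrow> 'o rel \<Rightarrow> ('p, 'x) fm
                   \<Rightarrow> (('w, 'o) position \<Rightarrow> ('w, 'o) position) \<Rightarrow> ('w, 'o) position \<Rightarrow> bool"
  for R V r \<phi> \<sigma> where
  win_prop: "sub \<phi> p = Some (Prop a) \<Longrightarrow> v \<in> V a \<Longrightarrow> wins R V r \<phi> \<sigma> (v, p, c)"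
| win_nprop: "sub \<phi> p = Some (NProp a) \<Longrightarrow> v \<notin> V a \<Longrightarrow> wins R V r \<phi> \<sigma> (v, p, c)"
| win_eloise: "eloise_turn \<phi> pos \<Longrightarrow> \<sigma> pos \<in> moves R r \<phi> pos \<Longrightarrow> wins R V r \<phi> \<sigma> (\<sigma> pos)
               \<Longrightarrow> wins R V r \<phi> \<sigma> pos"
| win_abelard: "abelard_turn \<phi> pos \<Longrightarrow> (\<forall>pos' \<in> moves R r \<phi> pos. wins R V r \<phi> \<sigma> pos')
               \<Longrightarrow> wins R V r \<phi> \<sigma> pos"

definition game_forces :: "('w \<Rightarrow> 'w \<Rightarrow> bool) \<Rightarrow> ('p \<Rightarrow> 'w set) \<Rightarrow> 'o rel
                           \<Rightarrow> 'w \<Rightarrow> ('p, 'x) fm \<Rightarrow> bool" where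
  "game_forces R V r w \<phi> \<longleftrightarrow> (\<exists>\<sigma>. wins R V r \<phi> \<sigma> (init_pos w))"

end

theory Submission
  imports Defs
begin

text \<open>Read a clock value below \<Gamma> at a \<mu>-binder as the corresponding ordinal approximant of the
  least fixed point, dually at a \<nu>-binder, and call a position true if its world satisfies its
  subformula under the valuation obtained this way.  Since \<Gamma> exceeds the cardinality of W, the
  approximants below \<Gamma> exhaust the fixed points, so truth is locally determined: a position of
  Eloise is true iff some move leads to a true position, a position of Abelard iff all moves do.
  Hence every position from which Eloise wins is true.  Conversely, the strategy of always moving
  to a true position is winning, because every move lowers the clocks of the binders on the
  current path lexicographically or enters a smaller subformula, so all plays are finite.\<close>

unbundle cardinal_syntax

section \<open>Ordinal approximants of fixed points\<close>

text \<open>Transfinite recursion along r, obtained as a least fixed point on functions: stage a is the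
  union of F applied to all earlier stages.\<close>
definition lfp_approx :: "'o rel \<Rightarrow> ('a set \<Rightarrow> 'a set) \<Rightarrow> 'o \<Rightarrow> 'a set" where
  "lfp_approx r F = lfp (\<lambda>M a. \<Union>b\<in>underS r a. F (M b))"

lemma lfp_approx_unfold:
  assumes "mono F"
  shows "lfp_approx r F a = (\<Union>b\<in>underS r a. F (lfp_approx r F b))"
proof -
  have "mono (\<lambda>M a. \<Union>b\<in>underS r a. F (M b))"
    using assms by (auto intro!: monoI le_funI simp: mono_def le_fun_def)
  then show ?thesis
    unfolding lfp_approx_def by (subst lfp_unfold) simp_all
qed

lemma lfp_approx_mono:
  assumes "mono F" "Well_order r" "(b, a) \<in> r"
  shows "lfp_approx r F b \<subseteq> lfp_approx r F a"
  using underS_incr[OF wo_rel.TRANS wo_rel.ANTISYM, of r, OF _ _ assms(3)] assms(2)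
  by (subst (1 2) lfp_approx_unfold[OF assms(1)]) (auto simp: wo_rel_def)

lemma lfp_approx_subset_lfp:
  assumes "mono F" "Well_order r"
  shows "lfp_approx r F a \<subseteq> lfp F"
proof -
  have "wf (r - Id)" using assms(2) by (simp add: well_order_on_def)
  then show ?thesis
  proof (induction a rule: wf_induct_rule)
    case (less a)
    then have "F (lfp_approx r F b) \<subseteq> F (lfp F)" if "b \<in> underS r a" for b
      using that assms(1) by (auto simp: underS_def dest: monoD)
    then show ?case
      by (subst lfp_approx_unfold[OF assms(1)], subst lfp_unfold[OF assms(1)]) blast
  qed
qed

lemma lfp_approx_subset_step:
  assumes "mono F" "Well_order r"
  shows "lfp_approx r F a \<subseteq> F (lfp_approx r F a)"
proof -
  have "F (lfp_approx r F b) \<subseteq> F (lfp_approx r F a)" if "b \<in> underS r a" for b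
    using monoD[OF assms(1) lfp_approx_mono[OF assms]] that by (auto simp: underS_def)
  then show ?thesis by (subst (1) lfp_approx_unfold[OF assms(1)]) blast
qed

text \<open>Otherwise choosing a new element at each stage would inject the field of r into the
  carrier.\<close>
lemma lfp_approx_stabilises:
  assumes "mono F" "Well_order r" and long: "|UNIV :: 'a set| <o |Field r|"
  shows "\<exists>a \<in> Field r. (F :: 'a set \<Rightarrow> 'a set) (lfp_approx r F a) \<subseteq> lfp_approx r F a"
proof (rule ccontr)
  assume "\<not> ?thesis"
  then have "\<forall>a \<in> Field r. \<exists>e. e \<in> F (lfp_approx r F a) - lfp_approx r F a" by blast
  then obtain f where f: "\<And>a. a \<in> Field r \<Longrightarrow> f a \<in> F (lfp_approx r F a) - lfp_approx r F a"
    by metis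
  have step: "F (lfp_approx r F a) \<subseteq> lfp_approx r F b" if "a \<in> underS r b" for a b
    using that by (subst (2) lfp_approx_unfold[OF assms(1)]) blast
  have "inj_on f (Field r)"
  proof (rule inj_onI, rule ccontr)
    fix a b assume ab: "a \<in> Field r" "b \<in> Field r" "f a = f b" "a \<noteq> b"
    then have "a \<in> underS r b \<or> b \<in> underS r a"
      using wo_rel.TOTALS[of r] assms(2) by (auto simp: underS_def wo_rel_def)
    then show False using step f[OF ab(1)] f[OF ab(2)] ab(3) by (metis Diff_iff in_mono)
  qed
  then have "|Field r| \<le>o |UNIV :: 'a set|" using card_of_ordLeq[of "Field r" "UNIV :: 'a set"] by blast
  with long show False using not_ordLess_ordLeq by blast
qed

lemma lfp_eq_UN_approx:
  assumes "mono F" "Well_order r" and long: "|UNIV :: 'a set| <o |Field r|"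
  shows "lfp (F :: 'a set \<Rightarrow> 'a set) = (\<Union>a\<in>Field r. F (lfp_approx r F a))"
proof (rule equalityI)
  obtain a where a: "a \<in> Field r" "F (lfp_approx r F a) \<subseteq> lfp_approx r F a"
    using lfp_approx_stabilises[OF assms] by blast
  have "lfp F \<subseteq> lfp_approx r F a" using a(2) by (rule lfp_lowerbound)
  also have "\<dots> \<subseteq> F (lfp_approx r F a)" by (rule lfp_approx_subset_step[OF assms(1,2)])
  finally show "lfp F \<subseteq> (\<Union>a\<in>Field r. F (lfp_approx r F a))" using a(1) by blast
  have "F (lfp_approx r F a) \<subseteq> lfp F" for a
    using monoD[OF assms(1) lfp_approx_subset_lfp[OF assms(1,2)]] lfp_fixpoint[OF assms(1)] by blast
  then show "(\<Union>a\<in>Field r. F (lfp_approx r F a)) \<subseteq> lfp F" by blast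
qed

definition gfp_approx :: "'o rel \<Rightarrow> ('a set \<Rightarrow> 'a set) \<Rightarrow> 'o \<Rightarrow> 'a set" where
  "gfp_approx r F a = - lfp_approx r (\<lambda>A. - F (- A)) a"

lemma mono_compl_dual: "mono (F :: 'a set \<Rightarrow> 'b set) \<Longrightarrow> mono (\<lambda>A. - F (- A))"
  unfolding mono_def by (meson Compl_anti_mono compl_le_compl_iff)

lemma gfp_approx_unfold:
  assumes "mono F"
  shows "gfp_approx r F a = (\<Inter>b\<in>underS r a. F (gfp_approx r F b))"
  unfolding gfp_approx_def by (subst lfp_approx_unfold[OF mono_compl_dual[OF assms]]) auto

lemma gfp_eq_compl_lfp_dual:
  assumes "mono (F :: 'a set \<Rightarrow> 'a set)"
  shows "gfp F = - lfp (\<lambda>A. - F (- A))"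
proof (rule antisym)
  have "F (- lfp (\<lambda>A. - F (- A))) = - lfp (\<lambda>A. - F (- A))"
    using lfp_fixpoint[OF mono_compl_dual[OF assms]] by (metis double_complement)
  then show "- lfp (\<lambda>A. - F (- A)) \<le> gfp F" by (intro gfp_upperbound) simp
  have "- F (- (- gfp F)) = - gfp F" using gfp_fixpoint[OF assms] by simp
  then have "lfp (\<lambda>A. - F (- A)) \<le> - gfp F" by (intro lfp_lowerbound) simp
  then show "gfp F \<le> - lfp (\<lambda>A. - F (- A))" by auto
qed

lemma gfp_eq_INT_approx:
  assumes "mono F" "Well_order r" and long: "|UNIV :: 'a set| <o |Field r|"
  shows "gfp (F :: 'a set \<Rightarrow> 'a set) = (\<Inter>a\<in>Field r. F (gfp_approx r F a))"
  using gfp_eq_compl_lfp_dual[OF assms(1)] lfp_eq_UN_approx[OF mono_compl_dual[OF assms(1)] assms(2) long]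
  by (simp add: gfp_approx_def)

definition lfp_clock :: "'o rel \<Rightarrow> ('a set \<Rightarrow> 'a set) \<Rightarrow> 'o option \<Rightarrow> 'a set" where
  "lfp_clock r F k = (case k of None \<Rightarrow> lfp F | Some a \<Rightarrow> lfp_approx r F a)"

definition gfp_clock :: "'o rel \<Rightarrow> ('a set \<Rightarrow> 'a set) \<Rightarrow> 'o option \<Rightarrow> 'a set" where
  "gfp_clock r F k = (case k of None \<Rightarrow> gfp F | Some a \<Rightarrow> gfp_approx r F a)"

lemma mem_lfp_clock_iff:
  assumes "mono F" "Well_order r" "|UNIV :: 'a set| <o |Field r|"
  shows "(v :: 'a) \<in> lfp_clock r F k \<longleftrightarrow> (\<exists>a\<in>Field r. olt r (Some a) k \<and> v \<in> F (lfp_approx r F a))"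
proof (cases k)
  case None
  then show ?thesis by (simp add: lfp_clock_def lfp_eq_UN_approx[OF assms])
next
  case (Some b)
  then show ?thesis
    by (auto simp: lfp_clock_def underS_def lfp_approx_unfold[OF assms(1), of r b] intro: FieldI1)
qed

lemma mem_gfp_clock_iff:
  assumes "mono F" "Well_order r" "|UNIV :: 'a set| <o |Field r|"
  shows "(v :: 'a) \<in> gfp_clock r F k \<longleftrightarrow> (\<forall>a\<in>Field r. olt r (Some a) k \<longrightarrow> v \<in> F (gfp_approx r F a))"
proof (cases k)
  case None
  then show ?thesis by (simp add: gfp_clock_def gfp_eq_INT_approx[OF assms])
next
  case (Some b)
  then show ?thesis
    by (auto simp: gfp_clock_def underS_def gfp_approx_unfold[OF assms(1), of r b] intro: FieldI1)
qed

lemma sat_mono: "s \<le> s' \<Longrightarrow> sat R V s f \<subseteq> sat R V s' f"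
proof (induction f arbitrary: s s')
  case (Mu x f)
  have "sat R V (s(x := A)) f \<subseteq> sat R V (s'(x := A)) f" for A
    using Mu.prems by (intro Mu.IH) (auto simp: le_fun_def)
  then show ?case by (simp add: lfp_mono)
next
  case (Nu x f)
  have "sat R V (s(x := A)) f \<subseteq> sat R V (s'(x := A)) f" for A
    using Nu.prems by (intro Nu.IH) (auto simp: le_fun_def)
  then show ?case by (simp add: gfp_mono)
next
  case (Or f g)
  from Or.IH(1)[OF Or.prems] Or.IH(2)[OF Or.prems] show ?case by auto
next
  case (And f g)
  from And.IH(1)[OF And.prems] And.IH(2)[OF And.prems] show ?case by auto
next
  case (Dia f)
  from Dia.IH[OF Dia.prems] show ?case by auto
next
  case (Box f)
  from Box.IH[OF Box.prems] show ?case by auto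
qed (auto simp: le_fun_def)

lemma mono_sat_upd: "mono (\<lambda>A. sat R V (s(x := A)) f)"
  by (rule monoI, rule sat_mono) (auto simp: le_fun_def)

lemma sub_append: "sub f (p @ p') = (case sub f p of None \<Rightarrow> None | Some g \<Rightarrow> sub g p')"
  by (induction f p rule: sub.induct) auto

lemma sub_length_size: "sub f p = Some g \<Longrightarrow> length p + size g \<le> size f"
  by (induction f p rule: sub.induct) auto

lemma nearest_binder_unique:
  assumes "nearest_binder f p x q1" "nearest_binder f p x q2"
  shows "q1 = q2"
proof -
  have "prefix q1 p" "prefix q2 p" using assms by (auto simp: nearest_binder_def strict_prefix_def)
  then have "prefix q1 q2 \<or> prefix q2 q1" by (rule prefix_same_cases)
  then show ?thesis using assms unfolding nearest_binder_def strict_prefix_def by metis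
qed

lemma sub_Cons: "sub f [i] = Some g \<Longrightarrow> sub f (i # p) = sub g p"
  using sub_append[of f "[i]" p] by simp

lemma sub_Cons_None: "sub f [i] = None \<Longrightarrow> sub f (i # p) = None"
  using sub_append[of f "[i]" p] by simp

lemma binder_of_Cons: "sub f [i] = Some g \<Longrightarrow> binder_of f (i # q) x \<longleftrightarrow> binder_of g q x"
  by (drule sub_Cons[of _ _ _ q]) (simp add: binder_of_def)

lemma fv_child: "sub f [i] = Some g \<Longrightarrow> x \<in> fv g \<Longrightarrow> \<not> binder_of f [] x \<Longrightarrow> x \<in> fv f"
  by (cases "(f, [i])" rule: sub.cases) (auto simp: binder_of_def)

lemma Var_unbound_free:
  "sub f p = Some (Var x) \<Longrightarrow> \<forall>q. strict_prefix q p \<longrightarrow> \<not> binder_of f q x \<Longrightarrow> x \<in> fv f"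
proof (induction p arbitrary: f)
  case (Cons i p)
  then obtain g where g: "sub f [i] = Some g" by (cases "sub f [i]") (simp_all add: sub_Cons_None)
  have "x \<in> fv g"
    using Cons.prems g by (intro Cons.IH) (simp_all add: sub_Cons[OF g] binder_of_Cons[OF g, symmetric])
  moreover have "\<not> binder_of f [] x" using Cons.prems(2) by simp
  ultimately show ?case by (rule fv_child[OF g])
qed simp

lemma Var_nearest_binder_exists:
  assumes "sub f p = Some (Var x)" "x \<notin> fv f"
  shows "\<exists>q. nearest_binder f p x q"
proof -
  let ?B = "\<lambda>q. strict_prefix q p \<and> binder_of f q x"
  obtain q0 where "?B q0" using Var_unbound_free[OF assms(1)] assms(2) by blast
  moreover have "\<forall>q. ?B q \<longrightarrow> length q < Suc (length p)"
    by (auto dest: prefix_length_less)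
  ultimately obtain q where "?B q" "\<forall>q'. ?B q' \<longrightarrow> length q' \<le> length q"
    using Lattices_Big.ex_has_greatest_nat[of ?B q0 length] by blast
  then have "nearest_binder f p x q"
    unfolding nearest_binder_def by (force dest: prefix_length_less)
  then show ?thesis ..
qed

section \<open>Truth of positions\<close>

text \<open>The valuation in force at the occurrence p (relative to the root path pre), where a label
  bound by a binder occurrence q is read as the approximant selected by the clock at q.\<close>
fun clock_env :: "('w \<Rightarrow> 'w \<Rightarrow> bool) \<Rightarrow> ('p \<Rightarrow> 'w set) \<Rightarrow> 'o rel \<Rightarrow> ('p, 'x) fm
    \<Rightarrow> nat list \<Rightarrow> nat list \<Rightarrow> (nat list \<Rightarrow> 'o option) \<Rightarrow> ('x \<Rightarrow> 'w set) \<Rightarrow> ('x \<Rightarrow> 'w set)" where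
  "clock_env R V r f pre [] c s = s"
| "clock_env R V r (Or f g) pre (0 # p) c s = clock_env R V r f (pre @ [0]) p c s"
| "clock_env R V r (Or f g) pre (Suc 0 # p) c s = clock_env R V r g (pre @ [Suc 0]) p c s"
| "clock_env R V r (And f g) pre (0 # p) c s = clock_env R V r f (pre @ [0]) p c s"
| "clock_env R V r (And f g) pre (Suc 0 # p) c s = clock_env R V r g (pre @ [Suc 0]) p c s"
| "clock_env R V r (Dia f) pre (0 # p) c s = clock_env R V r f (pre @ [0]) p c s"
| "clock_env R V r (Box f) pre (0 # p) c s = clock_env R V r f (pre @ [0]) p c s"
| "clock_env R V r (Mu x f) pre (0 # p) c s =
     clock_env R V r f (pre @ [0]) p c (s(x := lfp_clock r (\<lambda>A. sat R V (s(x := A)) f) (c pre)))"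
| "clock_env R V r (Nu x f) pre (0 # p) c s =
     clock_env R V r f (pre @ [0]) p c (s(x := gfp_clock r (\<lambda>A. sat R V (s(x := A)) f) (c pre)))"
| "clock_env R V r _ _ _ c s = s"

lemma clock_env_append:
  "sub f p = Some g \<Longrightarrow>
    clock_env R V r f pre (p @ p') c s = clock_env R V r g (pre @ p) p' c (clock_env R V r f pre p c s)"
  by (induction f p arbitrary: pre s rule: sub.induct) auto

lemma all_strict_prefix_Cons:
  "(\<forall>q. strict_prefix q (i # p) \<longrightarrow> P q) \<longleftrightarrow> P [] \<and> (\<forall>q. strict_prefix q p \<longrightarrow> P (i # q))"
  by (auto simp: neq_Nil_conv) (metis strict_prefix_simps(2,3) neq_Nil_conv)

lemma clock_env_cong:
  "\<forall>q. strict_prefix q p \<longrightarrow> c (pre @ q) = c' (pre @ q) \<Longrightarrow>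
    clock_env R V r f pre p c s = clock_env R V r f pre p c' s"
  by (induction R V r f pre p c s rule: clock_env.induct) (simp_all add: all_strict_prefix_Cons)

lemma clock_env_unbound:
  "\<forall>q. strict_prefix q p \<longrightarrow> \<not> binder_of f q x \<Longrightarrow> clock_env R V r f pre p c s x = s x"
  by (induction R V r f pre p c s rule: clock_env.induct)
    (auto simp: all_strict_prefix_Cons binder_of_def)

lemma clock_env_Mu_body:
  assumes "sub f q = Some (Mu x g)"
  shows "clock_env R V r f [] (q @ [0]) c s =
    (clock_env R V r f [] q c s)
      (x := lfp_clock r (\<lambda>A. sat R V ((clock_env R V r f [] q c s)(x := A)) g) (c q))"
  using clock_env_append[OF assms, of R V r "[]" "[0]" c s] by simp

lemma clock_env_Nu_body:
  assumes "sub f q = Some (Nu x g)"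
  shows "clock_env R V r f [] (q @ [0]) c s =
    (clock_env R V r f [] q c s)
      (x := gfp_clock r (\<lambda>A. sat R V ((clock_env R V r f [] q c s)(x := A)) g) (c q))"
  using clock_env_append[OF assms, of R V r "[]" "[0]" c s] by simp

lemma clock_env_nearest_binder:
  assumes nb: "nearest_binder f p x q" and "sub f p \<noteq> None"
  shows "clock_env R V r f [] p c s x = clock_env R V r f [] (q @ [0]) c s x"
proof -
  from nb obtain g where g: "sub f q = Some (Mu x g) \<or> sub f q = Some (Nu x g)"
    unfolding nearest_binder_def binder_of_def by blast
  from nb obtain i rest where "p = q @ i # rest"
    unfolding nearest_binder_def strict_prefix_def prefix_def by (metis append_Nil2 neq_Nil_conv)
  moreover have "i = 0" using assms(2) g calculation by (cases i) (auto simp: sub_append)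
  ultimately have p: "p = (q @ [0]) @ rest" by simp
  have body: "sub f (q @ [0]) = Some g" using g by (auto simp: sub_append)
  have "\<not> binder_of g l x" if "strict_prefix l rest" for l
  proof -
    have "strict_prefix q ((q @ [0]) @ l)" "strict_prefix ((q @ [0]) @ l) p"
      using that unfolding p by (auto simp: strict_prefix_def)
    then have "\<not> binder_of f ((q @ [0]) @ l) x" using nb by (auto simp: nearest_binder_def)
    moreover have "sub f ((q @ [0]) @ l) = sub g l" using sub_append[of f "q @ [0]" l] body by simp
    ultimately show ?thesis by (simp add: binder_of_def)
  qed
  then show ?thesis
    unfolding p clock_env_append[OF body] by (simp add: clock_env_unbound)
qed

lemma sub_snoc: "sub \<phi> p = Some \<theta> \<Longrightarrow> sub \<phi> (p @ [i]) = sub \<theta> [i]"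
  by (simp add: sub_append)

lemma clock_env_snoc:
  "sub \<phi> p = Some \<theta> \<Longrightarrow>
    clock_env R V r \<phi> [] (p @ [i]) c s = clock_env R V r \<theta> p [i] c (clock_env R V r \<phi> [] p c s)"
  using clock_env_append[of \<phi> p \<theta> R V r "[]" "[i]" c s] by simp

fun holds :: "('w \<Rightarrow> 'w \<Rightarrow> bool) \<Rightarrow> ('p \<Rightarrow> 'w set) \<Rightarrow> 'o rel \<Rightarrow> ('p, 'x) fm \<Rightarrow> ('x \<Rightarrow> 'w set)
    \<Rightarrow> ('w, 'o) position \<Rightarrow> bool" where
  "holds R V r \<phi> s (v, p, c) \<longleftrightarrow>
     (\<exists>\<theta>. sub \<phi> p = Some \<theta> \<and> v \<in> sat R V (clock_env R V r \<phi> [] p c s) \<theta>)"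

lemma holds_Mu_body:
  assumes "sub \<phi> q = Some (Mu x g)" and "c' q = Some a" and "\<forall>q'. strict_prefix q' q \<longrightarrow> c' q' = c q'"
  shows "holds R V r \<phi> s (v, q @ [0], c') \<longleftrightarrow>
    v \<in> sat R V ((clock_env R V r \<phi> [] q c s)
      (x := lfp_approx r (\<lambda>A. sat R V ((clock_env R V r \<phi> [] q c s)(x := A)) g) a)) g"
proof -
  have "clock_env R V r \<phi> [] q c' s = clock_env R V r \<phi> [] q c s"
    using assms(3) by (simp add: clock_env_cong)
  then show ?thesis
    using assms(1,2) by (simp add: clock_env_Mu_body sub_append lfp_clock_def)
qed

lemma holds_Nu_body:
  assumes "sub \<phi> q = Some (Nu x g)" and "c' q = Some a" and "\<forall>q'. strict_prefix q' q \<longrightarrow> c' q' = c q'"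
  shows "holds R V r \<phi> s (v, q @ [0], c') \<longleftrightarrow>
    v \<in> sat R V ((clock_env R V r \<phi> [] q c s)
      (x := gfp_approx r (\<lambda>A. sat R V ((clock_env R V r \<phi> [] q c s)(x := A)) g) a)) g"
proof -
  have "clock_env R V r \<phi> [] q c' s = clock_env R V r \<phi> [] q c s"
    using assms(3) by (simp add: clock_env_cong)
  then show ?thesis
    using assms(1,2) by (simp add: clock_env_Nu_body sub_append gfp_clock_def)
qed

lemma holds_Var:
  assumes "sub \<phi> p = Some (Var x)" and "nearest_binder \<phi> p x q"
  shows "holds R V r \<phi> s (v, p, c) \<longleftrightarrow> v \<in> clock_env R V r \<phi> [] (q @ [0]) c s x"
  using assms by (simp add: clock_env_nearest_binder[OF assms(2)])

lemma regen_at: "regen q g c q = g"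
  by (simp add: regen_def)

lemma regen_below:
  assumes "strict_prefix q' q"
  shows "regen q g c q' = c q'"
proof -
  have "length q' < length q" using assms by (rule prefix_length_less)
  then have "q' \<noteq> q" "\<not> prefix (q @ [0]) q'" by (auto dest: prefix_length_le)
  then show ?thesis by (simp add: regen_def)
qed

lemma moves_Var:
  assumes "sub \<phi> p = Some (Var x)" and "nearest_binder \<phi> p x q"
  shows "moves R r \<phi> (v, p, c) =
    {(v, q @ [0], regen q (Some a) c) | a. a \<in> Field r \<and> olt r (Some a) (c q)}"
proof -
  have "moves R r \<phi> (v, p, c) = {(v, q' @ [0], regen q' (Some a) c) | q' a.
      nearest_binder \<phi> p x q' \<and> a \<in> Field r \<and> olt r (Some a) (c q')}"
    using assms(1) by (simp add: moves_def)
  then show ?thesis using assms(2) nearest_binder_unique[OF assms(2)] by blast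
qed

lemma holds_eloise_turn:
  fixes R :: "'w \<Rightarrow> 'w \<Rightarrow> bool"
  assumes WO: "Well_order r" and long: "|UNIV :: 'w set| <o |Field r|"
    and turn: "eloise_turn \<phi> (v, p, c)"
  shows "holds R V r \<phi> s (v, p, c) \<longleftrightarrow> (\<exists>pos' \<in> moves R r \<phi> (v, p, c). holds R V r \<phi> s pos')"
proof -
  from turn obtain \<theta> where \<theta>: "sub \<phi> p = Some \<theta>"
    by (auto simp: eloise_turn_def split: option.splits)
  show ?thesis
  proof (cases \<theta>)
    case (Or f g)
    then show ?thesis using \<theta> by (auto simp: moves_def sub_snoc clock_env_snoc)
  next
    case (Dia f)
    then show ?thesis using \<theta> by (auto simp: moves_def sub_snoc clock_env_snoc)
  next
    case (Mu x g)
    let ?F = "\<lambda>A. sat R V ((clock_env R V r \<phi> [] p c s)(x := A)) g"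
    have "holds R V r \<phi> s (v, p, c) \<longleftrightarrow> v \<in> lfp_clock r ?F None"
      using \<theta> Mu by (simp add: lfp_clock_def)
    also have "\<dots> \<longleftrightarrow> (\<exists>a \<in> Field r. v \<in> ?F (lfp_approx r ?F a))"
      by (simp add: mem_lfp_clock_iff[OF mono_sat_upd WO long])
    also have "\<dots> \<longleftrightarrow> (\<exists>pos' \<in> moves R r \<phi> (v, p, c). holds R V r \<phi> s pos')"
    proof -
      have "holds R V r \<phi> s (v, p @ [0], c(p := Some a)) \<longleftrightarrow> v \<in> ?F (lfp_approx r ?F a)" for a
        using \<theta> Mu by (intro holds_Mu_body) (auto simp: strict_prefix_def)
      then show ?thesis using \<theta> Mu by (auto simp: moves_def)
    qed
    finally show ?thesis .
  next
    case (Var x)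
    from turn obtain q g where nb: "nearest_binder \<phi> p x q" and q: "sub \<phi> q = Some (Mu x g)"
      by (auto simp: eloise_turn_def \<theta> Var)
    let ?F = "\<lambda>A. sat R V ((clock_env R V r \<phi> [] q c s)(x := A)) g"
    have "holds R V r \<phi> s (v, p, c) \<longleftrightarrow> v \<in> lfp_clock r ?F (c q)"
      unfolding holds_Var[OF \<theta>[unfolded Var] nb] clock_env_Mu_body[OF q] by simp
    also have "\<dots> \<longleftrightarrow> (\<exists>a \<in> Field r. olt r (Some a) (c q) \<and> v \<in> ?F (lfp_approx r ?F a))"
      by (rule mem_lfp_clock_iff[OF mono_sat_upd WO long])
    also have "\<dots> \<longleftrightarrow> (\<exists>pos' \<in> moves R r \<phi> (v, p, c). holds R V r \<phi> s pos')"
    proof -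
      have "holds R V r \<phi> s (v, q @ [0], regen q (Some a) c) \<longleftrightarrow> v \<in> ?F (lfp_approx r ?F a)" for a
        by (rule holds_Mu_body[OF q regen_at]) (simp add: regen_below)
      then show ?thesis by (auto simp: moves_Var[OF \<theta>[unfolded Var] nb])
    qed
    finally show ?thesis .
  qed (use turn \<theta> in \<open>simp_all add: eloise_turn_def\<close>)
qed

lemma holds_abelard_turn:
  fixes R :: "'w \<Rightarrow> 'w \<Rightarrow> bool"
  assumes WO: "Well_order r" and long: "|UNIV :: 'w set| <o |Field r|"
    and turn: "abelard_turn \<phi> (v, p, c)"
  shows "holds R V r \<phi> s (v, p, c) \<longleftrightarrow> (\<forall>pos' \<in> moves R r \<phi> (v, p, c). holds R V r \<phi> s pos')"
proof -
  from turn obtain \<theta> where \<theta>: "sub \<phi> p = Some \<theta>"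
    by (auto simp: abelard_turn_def split: option.splits)
  show ?thesis
  proof (cases \<theta>)
    case (And f g)
    then show ?thesis using \<theta> by (auto simp: moves_def sub_snoc clock_env_snoc)
  next
    case (Box f)
    then show ?thesis using \<theta> by (auto simp: moves_def sub_snoc clock_env_snoc)
  next
    case (Nu x g)
    let ?F = "\<lambda>A. sat R V ((clock_env R V r \<phi> [] p c s)(x := A)) g"
    have "holds R V r \<phi> s (v, p, c) \<longleftrightarrow> v \<in> gfp_clock r ?F None"
      using \<theta> Nu by (simp add: gfp_clock_def)
    also have "\<dots> \<longleftrightarrow> (\<forall>a \<in> Field r. v \<in> ?F (gfp_approx r ?F a))"
      by (simp add: mem_gfp_clock_iff[OF mono_sat_upd WO long])
    also have "\<dots> \<longleftrightarrow> (\<forall>pos' \<in> moves R r \<phi> (v, p, c). holds R V r \<phi> s pos')"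
    proof -
      have "holds R V r \<phi> s (v, p @ [0], c(p := Some a)) \<longleftrightarrow> v \<in> ?F (gfp_approx r ?F a)" for a
        using \<theta> Nu by (intro holds_Nu_body) (auto simp: strict_prefix_def)
      then show ?thesis using \<theta> Nu by (auto simp: moves_def)
    qed
    finally show ?thesis .
  next
    case (Var x)
    from turn obtain q g where nb: "nearest_binder \<phi> p x q" and q: "sub \<phi> q = Some (Nu x g)"
      by (auto simp: abelard_turn_def \<theta> Var)
    let ?F = "\<lambda>A. sat R V ((clock_env R V r \<phi> [] q c s)(x := A)) g"
    have "holds R V r \<phi> s (v, p, c) \<longleftrightarrow> v \<in> gfp_clock r ?F (c q)"
      unfolding holds_Var[OF \<theta>[unfolded Var] nb] clock_env_Nu_body[OF q] by simp
    also have "\<dots> \<longleftrightarrow> (\<forall>a \<in> Field r. olt r (Some a) (c q) \<longrightarrow> v \<in> ?F (gfp_approx r ?F a))"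
      by (rule mem_gfp_clock_iff[OF mono_sat_upd WO long])
    also have "\<dots> \<longleftrightarrow> (\<forall>pos' \<in> moves R r \<phi> (v, p, c). holds R V r \<phi> s pos')"
    proof -
      have "holds R V r \<phi> s (v, q @ [0], regen q (Some a) c) \<longleftrightarrow> v \<in> ?F (gfp_approx r ?F a)" for a
        by (rule holds_Nu_body[OF q regen_at]) (simp add: regen_below)
      then show ?thesis by (auto simp: moves_Var[OF \<theta>[unfolded Var] nb])
    qed
    finally show ?thesis .
  qed (use turn \<theta> in \<open>simp_all add: abelard_turn_def\<close>)
qed

lemma sentence_position_cases:
  assumes "sentence \<phi>" and \<theta>: "sub \<phi> p = Some \<theta>"
  obtains (Prop) a where "\<theta> = Prop a" | (NProp) a where "\<theta> = NProp a"
    | (Eloise) "eloise_turn \<phi> (v, p, c)" | (Abelard) "abelard_turn \<phi> (v, p, c)"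
proof (cases \<theta>)
  case (Var x)
  then obtain q where nb: "nearest_binder \<phi> p x q"
    using Var_nearest_binder_exists \<theta> assms(1) by (fastforce simp: sentence_def)
  then obtain g where "sub \<phi> q = Some (Mu x g) \<or> sub \<phi> q = Some (Nu x g)"
    by (auto simp: nearest_binder_def binder_of_def)
  then show ?thesis using that nb \<theta> Var by (auto simp: eloise_turn_def abelard_turn_def)
qed (use \<theta> that in \<open>auto simp: eloise_turn_def abelard_turn_def\<close>)

lemma holds_of_wins:
  fixes R :: "'w \<Rightarrow> 'w \<Rightarrow> bool"
  assumes WO: "Well_order r" and long: "|UNIV :: 'w set| <o |Field r|"
  shows "wins R V r \<phi> \<sigma> pos \<Longrightarrow> holds R V r \<phi> s pos"
proof (induction rule: wins.induct)
  case (win_eloise pos)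
  then show ?case using holds_eloise_turn[OF WO long] by (cases pos) blast
next
  case (win_abelard pos)
  then show ?case using holds_abelard_turn[OF WO long] by (cases pos) blast
qed simp_all

section \<open>Termination of plays\<close>

lemma wf_olt:
  assumes "Well_order r"
  shows "wf {(a, b). olt r a b}"
proof (rule wf_subset)
  let ?f = "\<lambda>k. (if k = None then 1 :: nat else 0, the k)"
  show "wf (inv_image (less_than <*lex*> (r - Id)) ?f)"
    using assms by (intro wf_inv_image wf_lex_prod wf_less_than) (simp add: well_order_on_def)
  show "{(a, b). olt r a b} \<subseteq> inv_image (less_than <*lex*> (r - Id)) ?f"
  proof clarify
    fix a b assume "olt r a b"
    then show "(a, b) \<in> inv_image (less_than <*lex*> (r - Id)) ?f" by (cases a; cases b) auto
  qed
qed

definition clock_entry :: "('p, 'x) fm \<Rightarrow> nat list \<Rightarrow> (nat list \<Rightarrow> 'o option) \<Rightarrow> nat \<Rightarrow> 'o option" where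
  "clock_entry \<phi> p c d = (if d < length p \<and> (\<exists>x. binder_of \<phi> (take d p) x) then c (take d p) else None)"

definition move_rel :: "'o rel \<Rightarrow> ('p, 'x) fm \<Rightarrow> (('w, 'o) position \<times> ('w, 'o) position) set" where
  "move_rel r \<phi> = inv_image (lex {(a, b). olt r a b} <*lex*> less_than)
     (\<lambda>(v, p, c). (map (clock_entry \<phi> p c) [0..<size \<phi>], case sub \<phi> p of None \<Rightarrow> 0 | Some \<theta> \<Rightarrow> size \<theta>))"

lemma wf_move_rel: "Well_order r \<Longrightarrow> wf (move_rel r \<phi>)"
  unfolding move_rel_def by (intro wf_inv_image wf_lex_prod wf_lex wf_olt wf_less_than)

lemma lex_map_upt:
  assumes "\<And>d. d < k \<Longrightarrow> f d = g d" and "k < n" and "(f k, g k) \<in> S"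
  shows "(map f [0..<n], map g [0..<n]) \<in> lex S"
proof -
  have "[0..<n] = [0..<k] @ k # [Suc k..<n]"
    using upt_add_eq_append[of 0 k "n - k"] upt_conv_Cons[of k n] assms(2) by simp
  moreover have "map f [0..<k] = map g [0..<k]" using assms(1) by simp
  ultimately show ?thesis using assms(3) by (auto simp: lex_conv intro!: exI[of _ "map g [0..<k]"])
qed

lemma move_rel_clock_decrease:
  assumes "k < size \<phi>" and "\<And>d. d < k \<Longrightarrow> clock_entry \<phi> p' c' d = clock_entry \<phi> p c d"
    and "olt r (clock_entry \<phi> p' c' k) (clock_entry \<phi> p c k)"
  shows "((v', p', c'), (v, p, c)) \<in> move_rel r \<phi>"
  using lex_map_upt[of k "clock_entry \<phi> p' c'" "clock_entry \<phi> p c" "size \<phi>"] assms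
  by (simp add: move_rel_def)

lemma move_rel_child:
  assumes "sub \<phi> p = Some \<theta>" "\<nexists>x. binder_of \<phi> p x" "sub \<theta> [i] = Some \<theta>'" "size \<theta>' < size \<theta>"
  shows "((u, p @ [i], c), (v, p, c)) \<in> move_rel r \<phi>"
proof -
  have "clock_entry \<phi> (p @ [i]) c = clock_entry \<phi> p c"
    using assms(2) by (auto simp: clock_entry_def fun_eq_iff less_Suc_eq)
  then show ?thesis using assms by (simp add: move_rel_def sub_snoc)
qed

lemma move_rel_binder:
  assumes "sub \<phi> p = Some \<theta>" and "binder_of \<phi> p x"
  shows "((v, p @ [0], c(p := Some a)), (v, p, c)) \<in> move_rel r \<phi>"
proof (rule move_rel_clock_decrease)
  have "size \<theta> > 0" using assms by (auto simp: binder_of_def)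
  then show "length p < size \<phi>" using sub_length_size[OF assms(1)] by simp
  show "clock_entry \<phi> (p @ [0]) (c(p := Some a)) d = clock_entry \<phi> p c d" if "d < length p" for d
    using that by (auto simp: clock_entry_def)
  show "olt r (clock_entry \<phi> (p @ [0]) (c(p := Some a)) (length p)) (clock_entry \<phi> p c (length p))"
    using assms(2) by (auto simp: clock_entry_def)
qed

lemma move_rel_regen:
  assumes "nearest_binder \<phi> p x q" and "sub \<phi> p = Some \<theta>" and "olt r (Some a) (c q)"
  shows "((v, q @ [0], regen q (Some a) c), (v, p, c)) \<in> move_rel r \<phi>"
proof (rule move_rel_clock_decrease)
  from assms(1) obtain zs where p: "p = q @ zs" and "zs \<noteq> []" and q: "binder_of \<phi> q x"
    by (auto simp: nearest_binder_def strict_prefix_def prefix_def)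
  then have len: "length q < length p" by simp
  then show "length q < size \<phi>" using sub_length_size[OF assms(2)] by simp
  show "clock_entry \<phi> (q @ [0]) (regen q (Some a) c) d = clock_entry \<phi> p c d" if "d < length q" for d
  proof -
    have "take d q \<noteq> q" using that by (metis length_take min.absorb4 order_less_irrefl)
    then have "strict_prefix (take d q) q" by (simp add: strict_prefix_def take_is_prefix)
    then show ?thesis using that len by (auto simp: clock_entry_def regen_below p)
  qed
  show "olt r (clock_entry \<phi> (q @ [0]) (regen q (Some a) c) (length q)) (clock_entry \<phi> p c (length q))"
    using assms(3) q len by (auto simp: clock_entry_def regen_at p)
qed

lemma moves_decrease:
  assumes \<theta>: "sub \<phi> p = Some \<theta>" and move: "pos' \<in> moves R r \<phi> (v, p, c)"
  shows "(pos', (v, p, c)) \<in> move_rel r \<phi>"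
proof (cases \<theta>)
  case (Or f g)
  then have "\<nexists>x. binder_of \<phi> p x" using \<theta> by (simp add: binder_of_def)
  then show ?thesis
    using move \<theta> Or move_rel_child[OF \<theta>, where i = 0 and \<theta>' = f]
      move_rel_child[OF \<theta>, where i = 1 and \<theta>' = g]
    by (auto simp: moves_def)
next
  case (And f g)
  then have "\<nexists>x. binder_of \<phi> p x" using \<theta> by (simp add: binder_of_def)
  then show ?thesis
    using move \<theta> And move_rel_child[OF \<theta>, where i = 0 and \<theta>' = f]
      move_rel_child[OF \<theta>, where i = 1 and \<theta>' = g]
    by (auto simp: moves_def)
next
  case (Dia f)
  then have "\<nexists>x. binder_of \<phi> p x" using \<theta> by (simp add: binder_of_def)
  then show ?thesis using move move_rel_child[OF \<theta>, where i = 0 and \<theta>' = f] \<theta> Dia by (auto simp: moves_def)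
next
  case (Box f)
  then have "\<nexists>x. binder_of \<phi> p x" using \<theta> by (simp add: binder_of_def)
  then show ?thesis using move move_rel_child[OF \<theta>, where i = 0 and \<theta>' = f] \<theta> Box by (auto simp: moves_def)
next
  case (Mu x g)
  then have "binder_of \<phi> p x" using \<theta> by (simp add: binder_of_def)
  then show ?thesis using move move_rel_binder[OF \<theta>] \<theta> Mu by (auto simp: moves_def)
next
  case (Nu x g)
  then have "binder_of \<phi> p x" using \<theta> by (simp add: binder_of_def)
  then show ?thesis using move move_rel_binder[OF \<theta>] \<theta> Nu by (auto simp: moves_def)
next
  case (Var x)
  then show ?thesis using move move_rel_regen[OF _ \<theta>] \<theta> by (auto simp: moves_def)
qed (use move \<theta> in \<open>simp_all add: moves_def\<close>)

section \<open>The evaluation game characterises truth\<close>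

definition truth_strategy :: "('w \<Rightarrow> 'w \<Rightarrow> bool) \<Rightarrow> ('p \<Rightarrow> 'w set) \<Rightarrow> 'o rel \<Rightarrow> ('p, 'x) fm
    \<Rightarrow> ('x \<Rightarrow> 'w set) \<Rightarrow> ('w, 'o) position \<Rightarrow> ('w, 'o) position" where
  "truth_strategy R V r \<phi> s pos = (SOME pos'. pos' \<in> moves R r \<phi> pos \<and> holds R V r \<phi> s pos')"

lemma wins_of_holds:
  fixes R :: "'w \<Rightarrow> 'w \<Rightarrow> bool"
  assumes WO: "Well_order r" and long: "|UNIV :: 'w set| <o |Field r|" and "sentence \<phi>"
  shows "holds R V r \<phi> s pos \<Longrightarrow> wins R V r \<phi> (truth_strategy R V r \<phi> s) pos"
  using wf_move_rel[OF WO, of \<phi>]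
proof (induction pos rule: wf_induct_rule)
  case (less pos)
  obtain v p c where pos: "pos = (v, p, c)" by (cases pos)
  with less.prems obtain \<theta> where \<theta>: "sub \<phi> p = Some \<theta>" by auto
  have IH: "wins R V r \<phi> (truth_strategy R V r \<phi> s) pos'"
    if "pos' \<in> moves R r \<phi> pos" "holds R V r \<phi> s pos'" for pos'
    using moves_decrease[OF \<theta>] that pos by (intro less.IH) simp_all
  from assms(3) \<theta> show ?case
  proof (cases rule: sentence_position_cases[where v = v and c = c])
    case Prop
    then show ?thesis using less.prems \<theta> pos by (auto intro: win_prop)
  next
    case NProp
    then show ?thesis using less.prems \<theta> pos by (auto intro: win_nprop)
  next
    case Eloise
    then have "\<exists>pos'. pos' \<in> moves R r \<phi> pos \<and> holds R V r \<phi> s pos'"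
      using holds_eloise_turn[OF WO long] less.prems pos by blast
    then have "truth_strategy R V r \<phi> s pos \<in> moves R r \<phi> pos \<and>
        holds R V r \<phi> s (truth_strategy R V r \<phi> s pos)"
      unfolding truth_strategy_def by (rule someI_ex)
    with Eloise IH show ?thesis unfolding pos by (blast intro: win_eloise)
  next
    case Abelard
    then have "\<forall>pos' \<in> moves R r \<phi> pos. holds R V r \<phi> s pos'"
      using holds_abelard_turn[OF WO long] less.prems pos by blast
    with Abelard IH show ?thesis unfolding pos by (blast intro: win_abelard)
  qed
qed

lemma sat_iff_game_forces:
  fixes R :: "'w \<Rightarrow> 'w \<Rightarrow> bool"
  assumes "Well_order r" and "|UNIV :: 'w set| <o |Field r|" and "sentence \<phi>"
  shows "w \<in> sat R V s \<phi> \<longleftrightarrow> game_forces R V r w \<phi>"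
proof -
  have "holds R V r \<phi> s (init_pos w) \<longleftrightarrow> w \<in> sat R V s \<phi>" by (simp add: init_pos_def)
  then show ?thesis
    using wins_of_holds[OF assms] holds_of_wins[OF assms(1,2)] unfolding game_forces_def by blast
qed

lemma card_of_ordLess_Field_cardSuc: "|A| <o |Field (cardSuc (card_of A))|"
proof -
  have "Card_order |A|" "Card_order (cardSuc (card_of A))" by (simp_all add: card_of_Card_order cardSuc_Card_order)
  then show ?thesis
    using ordLess_ordIso_trans[OF cardSuc_greater ordIso_symmetric[OF card_of_Field_ordIso]] by blast
qed

theorem mainTheorem5:
  fixes R :: "'w \<Rightarrow> 'w \<Rightarrow> bool" and V :: "'p \<Rightarrow> 'w set"
    and s :: "'x \<Rightarrow> 'w set" and w :: 'w and \<phi> :: "('p, 'x) fm"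
  assumes "sentence \<phi>"
  shows "w \<in> sat R V s \<phi> \<longleftrightarrow> game_forces R V (cardSuc (card_of (UNIV :: 'w set))) w \<phi>"
proof (rule sat_iff_game_forces[OF _ card_of_ordLess_Field_cardSuc assms])
  show "Well_order (cardSuc (card_of (UNIV :: 'w set)))"
    by (simp add: card_order_on_well_order_on cardSuc_Card_order card_of_Card_order)
qed

end
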